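(* Let $\mathbb{K}$ be any field and $n\geq 4$. Let $S$ be a linear subspace of $\mathrm{S}_n(\mathbb{K})$ in which every matrix has rank at most $3$. For $M\in S$ let $P(M)\in\mathrm{S}_{n-1}(\mathbb{K})$ be the upper-left $(n-1)\times(n-1)$ submatrix of $M$. Assume that $P(S)\subset\mathrm{WS}_{n-1,1,1}(\mathbb{K})$ and $\dim P(S)>5$. Then $S$ is congruent to a subspace of $\mathrm{WS}_{n,1,1}(\mathbb{K})$.
   Context: $\mathrm{S}_p(\mathbb{K})$ denotes the $p\times p$ symmetric matrices. $\mathrm{WS}_{p,1,1}(\mathbb{K})$ is the space of $M=(m_{i,j})\in\mathrm{S}_p(\mathbb{K})$ with $m_{i,j}=0$ whenever $i>1$, $j>1$ and $\max(i,j)>2$. Subsets $\mathcal{V},\mathcal{W}$ of $\mathrm{M}_n(\mathbb{K})$ are congruent if $\mathcal{V}=Q\mathcal{W}Q^T$ for some $Q\in\mathrm{GL}_n(\mathbb{K})$. *)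

theory Defs
  imports "Jordan_Normal_Form.DL_Rank"
begin

definition sym_mats :: "nat \<Rightarrow> 'a::field mat set" where
  "sym_mats p = {M \<in> carrier_mat p p. transpose_mat M = M}"

text \<open>WS_{p,1,1}: symmetric M with m_{i,j} = 0 whenever i > 1, j > 1, max(i,j) > 2
  (1-based indices in the paper; 0-based here: i >= 1, j >= 1, max i j >= 2).\<close>
definition WS11 :: "nat \<Rightarrow> 'a::field mat set" where
  "WS11 p = {M \<in> sym_mats p. \<forall>i<p. \<forall>j<p. 1 \<le> i \<and> 1 \<le> j \<and> 2 \<le> max i j \<longrightarrow> M $$ (i,j) = 0}"

definition mat_subspace :: "nat \<Rightarrow> 'a::field mat set \<Rightarrow> bool" where
  "mat_subspace n V = subspace class_ring V (module_mat TYPE('a) n n)"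

definition mat_subspace_dim :: "nat \<Rightarrow> 'a::field mat set \<Rightarrow> nat" where
  "mat_subspace_dim n V = vectorspace.dim class_ring ((module_mat TYPE('a) n n)\<lparr>carrier := V\<rparr>)"

definition upper_left :: "nat \<Rightarrow> 'a mat \<Rightarrow> 'a mat" where
  "upper_left n M = mat (n - 1) (n - 1) (\<lambda>(i,j). M $$ (i,j))"

definition congr_img :: "'a::field mat \<Rightarrow> 'a mat set \<Rightarrow> 'a mat set" where
  "congr_img Q V = (\<lambda>M. Q * M * transpose_mat Q) ` V"

end

theory Submission
  imports Defs "Jordan_Normal_Form.DL_Rank_Submatrix"
begin

text \<open>
  Index from 0 and write N = n-1 for the last index; the "middle" indices are 2,...,n-2.
  By hypothesis every M in S vanishes on the middle-times-middle block and on the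
  entries (1,r) for middle r. Vanishing of the 4x4 minors on the indices {0,r,s,N}
  gives M(0,r) M(s,N) = M(0,s) M(r,N). Since dim P(S) > 4, the middle parts of the
  first rows of S span a space of dimension at least 2; polarising the identity then
  shows that there is a single scalar l with M(s,N) = l M(0,s) for all M and all middle s.
  Subtracting l times the first row and column from the last one clears these entries.
  The minors on {0,1,r,N} then show that the remaining symmetric 2x2 blocks on the indices
  {1,N} are all singular; a linear space of singular symmetric 2x2 matrices has a common
  isotropic vector, and two more transvections move it to e_N, which kills the last row and
  column outside the first column.
\<close>

section \<open>Determinants and transvections\<close>

lemma det_mat_Suc:
  fixes f :: "nat \<times> nat \<Rightarrow> 'a::comm_ring_1"
  shows "det (mat (Suc n) (Suc n) f) =
    (\<Sum>i<Suc n. f (i,0) * ((-1)^i * det (mat n n (\<lambda>(i',j'). f (if i' < i then i' else Suc i', Suc j')))))"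
proof -
  have "det (mat (Suc n) (Suc n) f) =
      (\<Sum>i<Suc n. mat (Suc n) (Suc n) f $$ (i,0) * cofactor (mat (Suc n) (Suc n) f) i 0)"
    by (rule laplace_expansion_column) auto
  also have "\<dots> = (\<Sum>i<Suc n. f (i,0) * ((-1)^i * det (mat n n (\<lambda>(i',j'). f (if i' < i then i' else Suc i', Suc j')))))"
  proof (rule sum.cong[OF refl])
    fix i assume "i \<in> {..<Suc n}"
    moreover have "mat_delete (mat (Suc n) (Suc n) f) i 0 =
        mat n n (\<lambda>(i',j'). f (if i' < i then i' else Suc i', Suc j'))"
      unfolding mat_delete_def by (rule eq_matI) auto
    ultimately show "mat (Suc n) (Suc n) f $$ (i,0) * cofactor (mat (Suc n) (Suc n) f) i 0 =
        f (i,0) * ((-1)^i * det (mat n n (\<lambda>(i',j'). f (if i' < i then i' else Suc i', Suc j'))))"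
      unfolding cofactor_def by simp
  qed
  finally show ?thesis .
qed

lemma det_mat_4:
  fixes f :: "nat \<times> nat \<Rightarrow> 'a::comm_ring_1"
  shows "det (mat 4 4 f) =
      f (0,0) * f (1,1) * f (2,2) * f (3,3) - f (0,0) * f (1,1) * f (2,3) * f (3,2)
    - f (0,0) * f (1,2) * f (2,1) * f (3,3) + f (0,0) * f (1,2) * f (2,3) * f (3,1)
    + f (0,0) * f (1,3) * f (2,1) * f (3,2) - f (0,0) * f (1,3) * f (2,2) * f (3,1)
    - f (0,1) * f (1,0) * f (2,2) * f (3,3) + f (0,1) * f (1,0) * f (2,3) * f (3,2)
    + f (0,1) * f (1,2) * f (2,0) * f (3,3) - f (0,1) * f (1,2) * f (2,3) * f (3,0)
    - f (0,1) * f (1,3) * f (2,0) * f (3,2) + f (0,1) * f (1,3) * f (2,2) * f (3,0)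
    + f (0,2) * f (1,0) * f (2,1) * f (3,3) - f (0,2) * f (1,0) * f (2,3) * f (3,1)
    - f (0,2) * f (1,1) * f (2,0) * f (3,3) + f (0,2) * f (1,1) * f (2,3) * f (3,0)
    + f (0,2) * f (1,3) * f (2,0) * f (3,1) - f (0,2) * f (1,3) * f (2,1) * f (3,0)
    - f (0,3) * f (1,0) * f (2,1) * f (3,2) + f (0,3) * f (1,0) * f (2,2) * f (3,1)
    + f (0,3) * f (1,1) * f (2,0) * f (3,2) - f (0,3) * f (1,1) * f (2,2) * f (3,0)
    - f (0,3) * f (1,2) * f (2,0) * f (3,1) + f (0,3) * f (1,2) * f (2,1) * f (3,0)"
  by (simp add: numeral_eq_Suc det_mat_Suc det_dim_zero lessThan_Suc algebra_simps)

lemma det_minor4_eq_0_if_rank_le_3: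
  fixes M :: "'a::field mat"
  assumes M: "M \<in> carrier_mat n n" and rank: "vec_space.rank n M \<le> 3"
    and abcd: "a < b" "b < c" "c < d" "d < n"
  shows "det (mat 4 4 (\<lambda>(i,j). M $$ ([a,b,c,d] ! i, [a,b,c,d] ! j))) = 0"
proof (rule ccontr)
  let ?I = "{a,b,c,d}"
  assume ne: "det (mat 4 4 (\<lambda>(i,j). M $$ ([a,b,c,d] ! i, [a,b,c,d] ! j))) \<noteq> 0"
  have I: "{i. i < n \<and> i \<in> ?I} = ?I" "card ?I = 4" using abcd by auto
  have below: "{x \<in> ?I. x < a} = {}" "{x \<in> ?I. x < b} = {a}" "{x \<in> ?I. x < c} = {a,b}"
    "{x \<in> ?I. x < d} = {a,b,c}" "card {a} = 1" "card {a,b} = 2" "card {a,b,c} = 3"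
    using abcd by auto
  have "pick ?I 0 = a" "pick ?I 1 = b" "pick ?I 2 = c" "pick ?I 3 = d"
    using pick_card_in_set[of a ?I] pick_card_in_set[of b ?I] pick_card_in_set[of c ?I]
      pick_card_in_set[of d ?I]
    unfolding below by simp_all
  then have pick: "i < 4 \<Longrightarrow> pick ?I i = [a,b,c,d] ! i" for i
    by (auto simp: less_Suc_eq numeral_eq_Suc simp del: pick.simps)
  have "submatrix M ?I ?I = mat 4 4 (\<lambda>(i,j). M $$ ([a,b,c,d] ! i, [a,b,c,d] ! j))"
    unfolding submatrix_def using M I by (intro eq_matI) (auto simp: pick)
  then have "4 \<le> vec_space.rank n M"
    using vec_space.rank_gt_minor[OF M, of ?I ?I] ne I by auto
  then show False using rank by auto
qed

definition transvection_mat :: "nat \<Rightarrow> 'a::comm_ring_1 \<Rightarrow> nat \<Rightarrow> nat \<Rightarrow> 'a mat" where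
  "transvection_mat n a k l = mat n n (\<lambda>(i,j). (if i = j then 1 else 0) + (if i = k \<and> j = l then a else 0))"

lemma transvection_mat_carrier[simp]: "transvection_mat n a k l \<in> carrier_mat n n"
  unfolding transvection_mat_def by auto

lemma index_transvection_mult:
  assumes A: "A \<in> carrier_mat n m" and i: "i < n" and j: "j < m" and l: "l < n"
  shows "(transvection_mat n a k l * A) $$ (i,j) = A $$ (i,j) + (if i = k then a * A $$ (l,j) else 0)"
proof -
  have "(transvection_mat n a k l * A) $$ (i,j) =
      (\<Sum>b<n. ((if i = b then 1 else 0) + (if i = k \<and> b = l then a else 0)) * A $$ (b,j))"
    using A i j unfolding transvection_mat_def
    by (auto simp: scalar_prod_def lessThan_atLeast0 intro!: sum.cong)
  also have "\<dots> = (\<Sum>b<n. (if i = b then A $$ (b,j) else 0) + (if i = k \<and> b = l then a * A $$ (b,j) else 0))"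
    by (rule sum.cong) (auto simp: algebra_simps)
  also have "\<dots> = A $$ (i,j) + (if i = k then a * A $$ (l,j) else 0)"
    using i l by (simp add: sum.distrib sum.delta)
  finally show ?thesis .
qed

lemma index_mult_transpose_transvection:
  assumes A: "A \<in> carrier_mat m n" and i: "i < m" and j: "j < n" and l: "l < n"
  shows "(A * transpose_mat (transvection_mat n a k l)) $$ (i,j) = A $$ (i,j) + (if j = k then a * A $$ (i,l) else 0)"
proof -
  have "(A * transpose_mat (transvection_mat n a k l)) $$ (i,j) =
      (\<Sum>b<n. A $$ (i,b) * ((if j = b then 1 else 0) + (if j = k \<and> b = l then a else 0)))"
    using A i j unfolding transvection_mat_def
    by (auto simp: scalar_prod_def lessThan_atLeast0 intro!: sum.cong)
  also have "\<dots> = (\<Sum>b<n. (if j = b then A $$ (i,b) else 0) + (if j = k \<and> b = l then a * A $$ (i,b) else 0))"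
    by (rule sum.cong) (auto simp: algebra_simps)
  also have "\<dots> = A $$ (i,j) + (if j = k then a * A $$ (i,l) else 0)"
    using j l by (simp add: sum.distrib sum.delta)
  finally show ?thesis .
qed

lemma index_transvection_congruence:
  assumes A: "A \<in> carrier_mat n n" and i: "i < n" and j: "j < n" and l: "l < n" and kl: "k \<noteq> l"
  shows "(transvection_mat n a k l * A * transpose_mat (transvection_mat n a k l)) $$ (i,j) =
     A $$ (i,j) + (if i = k then a * A $$ (l,j) else 0) + (if j = k then a * A $$ (i,l) else 0)
     + (if i = k \<and> j = k then a * a * A $$ (l,l) else 0)"
proof -
  have TA: "transvection_mat n a k l * A \<in> carrier_mat n n"
    by (rule mult_carrier_mat[OF transvection_mat_carrier A])
  show ?thesis
    unfolding index_mult_transpose_transvection[OF TA i j l] index_transvection_mult[OF A i j l]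
      index_transvection_mult[OF A i l l]
    using kl by (auto simp: algebra_simps)
qed

lemma transvection_mat_inverse:
  assumes "k \<noteq> l" "k < n" "l < n"
  shows "transvection_mat n a k l * transvection_mat n (-a) k l = 1\<^sub>m n"
proof (rule eq_matI)
  fix i j assume "i < dim_row (1\<^sub>m n)" "j < dim_col (1\<^sub>m n)"
  then have i: "i < n" and j: "j < n" by auto
  show "(transvection_mat n a k l * transvection_mat n (-a) k l) $$ (i,j) = 1\<^sub>m n $$ (i,j)"
    unfolding index_transvection_mult[OF transvection_mat_carrier i j assms(3)]
    using assms i j by (auto simp: transvection_mat_def)
qed (auto simp: transvection_mat_def)

definition supported_on_corner :: "nat \<Rightarrow> 'a::zero mat \<Rightarrow> bool" where
  "supported_on_corner n A \<longleftrightarrow>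
     (\<forall>i<n. \<forall>j<n. 1 \<le> i \<longrightarrow> 1 \<le> j \<longrightarrow> \<not> (i \<in> {1, n-1} \<and> j \<in> {1, n-1}) \<longrightarrow> A $$ (i,j) = 0)"

lemma transvections_clear_corner:
  fixes A :: "'a::field mat"
  assumes A: "A \<in> carrier_mat n n" and n: "n \<ge> 3" and supp: "supported_on_corner n A"
    and sym: "A $$ (n-1,1) = A $$ (1,n-1)"
    and off_zero: "A $$ (1,n-1) + \<alpha> * A $$ (n-1,n-1) +
        \<beta> * (A $$ (1,1) + 2 * \<alpha> * A $$ (1,n-1) + \<alpha> * \<alpha> * A $$ (n-1,n-1)) = 0"
    and last_zero: "A $$ (n-1,n-1) + 2 * \<beta> * (A $$ (1,n-1) + \<alpha> * A $$ (n-1,n-1)) +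
        \<beta> * \<beta> * (A $$ (1,1) + 2 * \<alpha> * A $$ (1,n-1) + \<alpha> * \<alpha> * A $$ (n-1,n-1)) = 0"
    and ij: "i < n" "j < n" "1 \<le> i" "1 \<le> j" "2 \<le> max i j"
  shows "(transvection_mat n \<beta> (n-1) 1 *
      (transvection_mat n \<alpha> 1 (n-1) * A * transpose_mat (transvection_mat n \<alpha> 1 (n-1))) *
      transpose_mat (transvection_mat n \<beta> (n-1) 1)) $$ (i,j) = 0"
proof -
  let ?B = "transvection_mat n \<alpha> 1 (n-1) * A * transpose_mat (transvection_mat n \<alpha> 1 (n-1))"
  let ?y = "A $$ (1,1)" and ?c = "A $$ (1,n-1)" and ?d = "A $$ (n-1,n-1)"
  have B: "?B \<in> carrier_mat n n"
    using A by (meson transvection_mat_carrier mult_carrier_mat transpose_carrier_mat)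
  have idx: "1 < n" "n - 1 < n" "1 \<noteq> n - 1" "1 \<le> n - 1" using n by auto
  have B_idx: "?B $$ (i',j') = (if i' = 1 \<and> j' = 1 then ?y + 2 * \<alpha> * ?c + \<alpha> * \<alpha> * ?d
      else if i' = 1 \<and> j' = n-1 then ?c + \<alpha> * ?d else if i' = n-1 \<and> j' = 1 then ?c + \<alpha> * ?d
      else if i' = n-1 \<and> j' = n-1 then ?d else 0)"
    if "i' < n" "j' < n" "1 \<le> i'" "1 \<le> j'" for i' j'
  proof -
    have zero: "A $$ (a,b) = 0 \<and> A $$ (b,a) = 0"
      if "a < n" "b < n" "1 \<le> a" "1 \<le> b" "a \<noteq> 1" "a \<noteq> n - 1" for a b
      using supp that unfolding supported_on_corner_def by auto
    show ?thesis
      unfolding index_transvection_congruence[OF A that(1,2) idx(2,3)]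
      using that idx sym zero[of i' j'] zero[of j' i'] zero[of i' "n-1"] zero[of i' 1]
        zero[of j' "n-1"] zero[of j' 1]
      by (auto simp: algebra_simps)
  qed
  show ?thesis
    unfolding index_transvection_congruence[OF B ij(1,2) idx(1) idx(3)[symmetric]]
    using ij idx off_zero last_zero B_idx[OF ij(1-4)] B_idx[OF ij(1) idx(1) ij(3) order_refl]
      B_idx[OF idx(1) ij(2) order_refl ij(4)] B_idx[OF idx(1) idx(1) order_refl order_refl]
    by (auto simp: algebra_simps)
qed

section \<open>Congruence\<close>

lemma congruence_mult:
  fixes A B M :: "'a::comm_ring_1 mat"
  assumes A: "A \<in> carrier_mat n n" and B: "B \<in> carrier_mat n n" and M: "M \<in> carrier_mat n n"
  shows "A * (B * M * transpose_mat B) * transpose_mat A = (A * B) * M * transpose_mat (A * B)"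
  unfolding transpose_mult[OF A B] using A B M by (simp add: assoc_mult_mat[of _ n n _ n _ n])

lemma congruence_symmetric:
  fixes G M :: "'a::comm_ring_1 mat"
  assumes G: "G \<in> carrier_mat n n" and M: "M \<in> carrier_mat n n" and sym: "transpose_mat M = M"
  shows "transpose_mat (G * M * transpose_mat G) = G * M * transpose_mat G"
proof -
  have "transpose_mat (G * M * transpose_mat G) = G * (transpose_mat M * transpose_mat G)"
    using G M by (simp add: transpose_mult[of _ n n _ n])
  also have "\<dots> = G * M * transpose_mat G" using G M sym by simp
  finally show ?thesis .
qed

lemma mult_right_inverse:
  fixes A A' B B' :: "'a::comm_ring_1 mat"
  assumes carrier: "A \<in> carrier_mat n n" "A' \<in> carrier_mat n n" "B \<in> carrier_mat n n" "B' \<in> carrier_mat n n"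
    and inverse: "A * A' = 1\<^sub>m n" "B * B' = 1\<^sub>m n"
  shows "(A * B) * (B' * A') = 1\<^sub>m n"
proof -
  have "(A * B) * (B' * A') = A * ((B * B') * A')"
    using carrier by (simp add: assoc_mult_mat[of _ n n _ n _ n])
  then show ?thesis using inverse carrier by simp
qed

lemma mat_subspace_linear_image:
  fixes f :: "'a::field mat \<Rightarrow> 'a mat"
  assumes sub: "mat_subspace n S" and S: "S \<subseteq> carrier_mat n n"
    and f_carrier: "\<And>M. M \<in> carrier_mat n n \<Longrightarrow> f M \<in> carrier_mat m m"
    and f_add: "\<And>M N. M \<in> carrier_mat n n \<Longrightarrow> N \<in> carrier_mat n n \<Longrightarrow> f (M + N) = f M + f N"
    and f_smult: "\<And>c M. M \<in> carrier_mat n n \<Longrightarrow> f (c \<cdot>\<^sub>m M) = c \<cdot>\<^sub>m f M"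
  shows "mat_subspace m (f ` S)"
proof -
  have sm: "submodule class_ring S (module_mat TYPE('a) n n)"
    using sub unfolding mat_subspace_def by (rule VectorSpace.subspace.submod)
  have vs: "vectorspace class_ring (module_mat TYPE('a) m m)" by (rule matrix_vs)
  then have md: "Module.module class_ring (module_mat TYPE('a) m m)" by (simp add: vectorspace_def)
  have zero: "0\<^sub>m n n \<in> S" using submodule.zero_closed[OF sm] by (simp add: module_mat_simps)
  have "f (0 \<cdot>\<^sub>m 0\<^sub>m n n) = 0 \<cdot>\<^sub>m f (0\<^sub>m n n)" by (rule f_smult) auto
  also have "\<dots> = 0\<^sub>m m m" using f_carrier[of "0\<^sub>m n n"] by (intro eq_matI) auto
  finally have f_zero: "f (0\<^sub>m n n) = 0\<^sub>m m m" by simp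
  show ?thesis
    unfolding mat_subspace_def
  proof (rule VectorSpace.subspace.intro[OF vs], rule submodule.intro[OF md])
    show "f ` S \<subseteq> carrier (module_mat TYPE('a) m m)" using f_carrier S by (auto simp: module_mat_simps)
    show "zero (module_mat TYPE('a) m m) \<in> f ` S"
      using zero f_zero by (auto simp: module_mat_simps intro!: image_eqI[of _ f "0\<^sub>m n n"])
    fix v w assume "v \<in> f ` S" "w \<in> f ` S"
    then obtain M N where MN: "M \<in> S" "N \<in> S" "v = f M" "w = f N" by auto
    have "M + N \<in> S" using submodule.m_closed[OF sm MN(1,2)] by (simp add: module_mat_simps)
    moreover have "f (M + N) = v + w" using f_add MN S by auto
    ultimately show "add (module_mat TYPE('a) m m) v w \<in> f ` S"
      by (auto simp: module_mat_simps intro!: image_eqI[of _ f "M + N"])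
  next
    fix c v assume "c \<in> carrier (class_ring :: 'a ring)" "v \<in> f ` S"
    then obtain M where M: "M \<in> S" "v = f M" by auto
    have "c \<cdot>\<^sub>m M \<in> S" using submodule.smult_closed[OF sm _ M(1)] by (simp add: module_mat_simps)
    moreover have "f (c \<cdot>\<^sub>m M) = c \<cdot>\<^sub>m v" using f_smult M S by auto
    ultimately show "smult (module_mat TYPE('a) m m) c v \<in> f ` S"
      by (auto simp: module_mat_simps intro!: image_eqI[of _ f "c \<cdot>\<^sub>m M"])
  qed
qed

definition congruent_into_WS11 :: "nat \<Rightarrow> 'a::field mat set \<Rightarrow> bool" where
  "congruent_into_WS11 n S \<longleftrightarrow> (\<exists>Q V. Q \<in> carrier_mat n n \<and> invertible_mat Q \<and> mat_subspace n V \<and>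
     V \<subseteq> WS11 n \<and> S = congr_img Q V)"

lemma congruent_into_WS11I:
  fixes S :: "'a::field mat set"
  assumes sub: "mat_subspace n S" and S: "S \<subseteq> carrier_mat n n"
    and G: "G \<in> carrier_mat n n" and H: "H \<in> carrier_mat n n" and GH: "G * H = 1\<^sub>m n"
    and WS: "\<And>M. M \<in> S \<Longrightarrow> G * M * transpose_mat G \<in> WS11 n"
  shows "congruent_into_WS11 n S"
  unfolding congruent_into_WS11_def
proof (intro exI conjI)
  have HG: "H * G = 1\<^sub>m n" by (rule mat_mult_left_right_inverse[OF G H GH])
  let ?f = "\<lambda>M. G * M * transpose_mat G"
  show "H \<in> carrier_mat n n" by fact
  show "invertible_mat H"
    unfolding invertible_mat_def inverts_mat_def using H G GH HG by (auto intro!: exI[of _ G])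
  show "mat_subspace n (?f ` S)"
  proof (rule mat_subspace_linear_image[OF sub S])
    fix M N :: "'a mat" assume M: "M \<in> carrier_mat n n" and N: "N \<in> carrier_mat n n"
    show "?f M \<in> carrier_mat n n" using G M by auto
    show "?f (M + N) = ?f M + ?f N"
      using G M N by (simp add: mult_add_distrib_mat[OF G M N] add_mult_distrib_mat[of _ n n _ _ n])
  next
    fix c and M :: "'a mat" assume M: "M \<in> carrier_mat n n"
    show "?f (c \<cdot>\<^sub>m M) = c \<cdot>\<^sub>m ?f M" using G M
      by (simp add: mult_smult_distrib[of _ n n _ n] mult_smult_assoc_mat[of _ n n _ n])
  qed
  show "?f ` S \<subseteq> WS11 n" using WS by auto
  have "H * ?f M * transpose_mat H = M" if "M \<in> S" for M
    using congruence_mult[OF H G, of M] HG that S by auto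
  then show "S = congr_img H (?f ` S)"
    unfolding congr_img_def image_image by simp
qed

section \<open>Dimension bounds\<close>

lemma (in vectorspace) dim_le_if_lin_indpt_card_le:
  assumes bound: "\<And>B. B \<subseteq> carrier V \<Longrightarrow> finite B \<Longrightarrow> lin_indpt B \<Longrightarrow> card B \<le> k"
  shows "dim \<le> k"
proof -
  have fin: "finite B" if B: "B \<subseteq> carrier V" "lin_indpt B" for B
  proof (rule ccontr)
    assume "infinite B"
    then obtain B' where B': "B' \<subseteq> B" "finite B'" "card B' = Suc k"
      using infinite_arbitrarily_large by blast
    then have "lin_indpt B'" using subset_li_is_li B by auto
    then show False using bound[of B'] B B' by auto
  qed
  let ?C = "card ` {B. B \<subseteq> carrier V \<and> lin_indpt B}"
  have "?C \<subseteq> {..k}" using bound fin by auto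
  then have finC: "finite ?C" by (rule finite_subset) auto
  have "lin_indpt {}" unfolding lin_dep_def by auto
  then have neC: "?C \<noteq> {}" by auto
  obtain B0 where B0: "B0 \<subseteq> carrier V" "lin_indpt B0" "card B0 = Max ?C"
    using Max_in[OF finC neC] by auto
  have "maximal B0 (\<lambda>S. S \<subseteq> carrier V \<and> lin_indpt S)"
    unfolding maximal_def
  proof (rule conjI)
    show "B0 \<subseteq> carrier V \<and> lin_indpt B0" using B0 by auto
    show "\<forall>B. B0 \<subseteq> B \<and> B \<subseteq> carrier V \<and> lin_indpt B \<longrightarrow> B = B0"
    proof (intro allI impI)
      fix B assume B: "B0 \<subseteq> B \<and> B \<subseteq> carrier V \<and> lin_indpt B"
      then have fB: "finite B" using fin by auto
      have "card B \<le> Max ?C" using Max_ge[OF finC] B by auto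
      moreover have "card B0 \<le> card B" using card_mono[OF fB] B by auto
      ultimately have "card B0 = card B" using B0 by auto
      then show "B = B0" using card_subset_eq[OF fB] B by auto
    qed
  qed
  then have "gen_set B0" by (rule max_li_is_gen)
  then have "dim \<le> card B0" using gen_ge_dim[OF fin[OF B0(1,2)] B0(1)] by auto
  also have "card B0 \<le> k" using bound[OF B0(1) fin[OF B0(1,2)] B0(2)] .
  finally show ?thesis .
qed

lemma (in vectorspace) subspace_dim_le_card_of_span:
  assumes W: "VectorSpace.subspace K W V" and A: "finite A" "A \<subseteq> carrier V" and WA: "W \<subseteq> span A"
  shows "vectorspace.dim K (vs W) \<le> card A"
proof -
  interpret VW: vectorspace K "vs W" by (rule subspace_is_vs[OF W])
  show ?thesis
  proof (rule VW.dim_le_if_lin_indpt_card_le)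
    fix B assume B: "B \<subseteq> carrier (vs W)" "finite B" "VW.lin_indpt B"
    then have BW: "B \<subseteq> W" by simp
    then have "lin_indpt B"
      using B(3) span_li_not_depend(2)[OF BW subspace.submod[OF W]] by simp
    then have "\<exists>C. C \<subseteq> carrier V \<and> int (card C) \<le> int (card A) - int (card B)"
      using replacement[OF B(2) A(1) A(2)] BW WA by blast
    then show "card B \<le> card A" by (elim exE conjE) linarith
  qed
qed

lemma rank_one_if_2x2_minors_vanish:
  fixes f :: "'b \<Rightarrow> 'c \<Rightarrow> 'a::field"
  assumes minors: "\<And>a b r s. a \<in> A \<Longrightarrow> b \<in> A \<Longrightarrow> P r \<Longrightarrow> P s \<Longrightarrow> f a r * f b s = f a s * f b r"
  obtains t u where "\<And>a r. a \<in> A \<Longrightarrow> P r \<Longrightarrow> f a r = t a * u r"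
proof (cases "\<exists>a0\<in>A. \<exists>r0. P r0 \<and> f a0 r0 \<noteq> 0")
  case True
  then obtain a0 r0 where a0: "a0 \<in> A" "P r0" "f a0 r0 \<noteq> 0" by auto
  show ?thesis
  proof (rule that[of "\<lambda>a. f a r0 / f a0 r0" "f a0"])
    fix a r assume "a \<in> A" "P r"
    then have "f a0 r0 * f a r = f a0 r * f a r0" using minors a0 by blast
    then show "f a r = f a r0 / f a0 r0 * f a0 r" using a0(3) by (simp add: field_simps)
  qed
next
  case False
  then show ?thesis by (intro that[of "\<lambda>_. 0" "\<lambda>_. 0"]) auto
qed

lemma eq_0_if_proportional_to_independent_pair:
  fixes u v f :: "'b \<Rightarrow> 'a::field"
  assumes independent: "u r1 * v r2 - u r2 * v r1 \<noteq> 0"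
    and u: "\<And>r s. P r \<Longrightarrow> P s \<Longrightarrow> u r * f s = u s * f r"
    and v: "\<And>r s. P r \<Longrightarrow> P s \<Longrightarrow> v r * f s = v s * f r"
    and r12: "P r1" "P r2" and s: "P s"
  shows "f s = 0"
proof -
  let ?D = "u r1 * v r2 - u r2 * v r1"
  have expand: "?D * g = v r2 * (u r1 * g) - u r2 * (v r1 * g)" "?D * g = u r1 * (v r2 * g) - v r1 * (u r2 * g)"
    for g by (simp_all add: algebra_simps)
  have "?D * f r2 = 0"
    unfolding expand(1) u[OF r12] v[OF r12] by (simp add: algebra_simps)
  then have f2: "f r2 = 0" using independent by simp
  have "?D * f r1 = 0"
    unfolding expand(2) u[OF r12(2,1)] v[OF r12(2,1)] f2 by simp
  then have f1: "f r1 = 0" using independent by simp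
  have "?D * f s = 0"
    unfolding expand(1) u[OF r12(1) s] v[OF r12(1) s] f1 by simp
  then show ?thesis using independent by simp
qed

lemma singular_sum_proportional:
  fixes y0 c0 d0 y c d :: "'a::field"
  assumes y0: "y0 \<noteq> 0" and singular0: "y0 * d0 = c0^2" and singular: "y * d = c^2"
    and singular_sum: "(y0 + y) * (d0 + d) = (c0 + c)^2"
  shows "c * y0 = y * c0" "d * y0 = c * c0"
proof -
  have cross: "y0 * d + y * d0 = 2 * c0 * c"
    using singular0 singular singular_sum by (simp add: power2_eq_square algebra_simps)
  have "(c * y0 - y * c0)^2 = c^2 * y0^2 - 2 * c * y0 * y * c0 + y^2 * c0^2"
    by (simp add: power2_eq_square algebra_simps)
  also have "\<dots> = y * y0 * (y0 * d + y * d0 - 2 * c * c0)"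
    unfolding singular[symmetric] singular0[symmetric] by (simp add: power2_eq_square algebra_simps)
  also have "\<dots> = 0" using cross by (simp add: algebra_simps)
  finally show c: "c * y0 = y * c0" by simp
  have "y0 * (c0 * c) = y * c0^2" using c by (simp add: power2_eq_square algebra_simps)
  also have "\<dots> = y0 * (y * d0)" using singular0 by (simp add: algebra_simps)
  finally have c0c: "c0 * c = y * d0" using y0 by simp
  have "y0 * d = 2 * c0 * c - y * d0" using cross by (simp add: algebra_simps)
  also have "\<dots> = 2 * c0 * c - c0 * c" unfolding c0c ..
  also have "\<dots> = c0 * c" by (simp add: algebra_simps)
  finally show "d * y0 = c * c0" by (simp add: ac_simps)
qed

text \<open>
  The two expressions are the entries (2,1) and (2,2) of the symmetric matrix with rows (y,c),
  (c,d) after congruence by the transvection with rows (1,\<alpha>), (0,1) and then by the one with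
  rows (1,0), (\<beta>,1). Additively closed families of singular such matrices have a common
  isotropic vector, which these two transvections move to the second basis vector.
\<close>
lemma common_reduction_of_singular_pencil:
  fixes y c d :: "'b::plus \<Rightarrow> 'a::field"
  assumes closed: "\<And>M N. M \<in> A \<Longrightarrow> N \<in> A \<Longrightarrow> M + N \<in> A"
    and additive: "\<And>M N. M \<in> A \<Longrightarrow> N \<in> A \<Longrightarrow>
       y (M + N) = y M + y N \<and> c (M + N) = c M + c N \<and> d (M + N) = d M + d N"
    and singular: "\<And>M. M \<in> A \<Longrightarrow> y M * d M = (c M)^2"
  obtains \<alpha> \<beta> where "\<And>M. M \<in> A \<Longrightarrow>
      c M + \<alpha> * d M + \<beta> * (y M + 2 * \<alpha> * c M + \<alpha> * \<alpha> * d M) = 0 \<and>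
      d M + 2 * \<beta> * (c M + \<alpha> * d M) + \<beta> * \<beta> * (y M + 2 * \<alpha> * c M + \<alpha> * \<alpha> * d M) = 0"
proof (cases "\<exists>M0\<in>A. y M0 \<noteq> 0")
  case False
  show ?thesis
  proof (rule that[of 1 "-1"])
    fix M assume "M \<in> A"
    then have "y M = 0" "c M = 0" using False singular[of M] by auto
    then show "c M + 1 * d M + - 1 * (y M + 2 * 1 * c M + 1 * 1 * d M) = 0 \<and>
        d M + 2 * - 1 * (c M + 1 * d M) + - 1 * - 1 * (y M + 2 * 1 * c M + 1 * 1 * d M) = 0"
      by simp
  qed
next
  case True
  then obtain M0 where M0: "M0 \<in> A" "y M0 \<noteq> 0" by auto
  show ?thesis
  proof (rule that[of 0 "- c M0 / y M0"])
    fix M assume M: "M \<in> A"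
    have "(y M0 + y M) * (d M0 + d M) = (c M0 + c M)^2"
      using singular[OF closed[OF M0(1) M]] additive[OF M0(1) M] by simp
    note proportional = singular_sum_proportional[OF M0(2) singular[OF M0(1)] singular[OF M] this]
    have "c M = y M * c M0 / y M0" "d M = c M * c M0 / y M0"
      using proportional M0(2) by (simp_all add: field_simps)
    then show "c M + 0 * d M + - c M0 / y M0 * (y M + 2 * 0 * c M + 0 * 0 * d M) = 0 \<and>
        d M + 2 * (- c M0 / y M0) * (c M + 0 * d M) +
          - c M0 / y M0 * (- c M0 / y M0) * (y M + 2 * 0 * c M + 0 * 0 * d M) = 0"
      using M0(2) by (simp add: field_simps power2_eq_square)
  qed
qed

section \<open>Rank-three spaces with upper-left part in WS11\<close>

definition sym_unit_mat :: "nat \<Rightarrow> nat \<Rightarrow> nat \<Rightarrow> 'a::zero_neq_one mat" where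
  "sym_unit_mat m k l = mat m m (\<lambda>(i,j). if (i,j) = (k,l) \<or> (i,j) = (l,k) then 1 else 0)"

definition border_mat :: "nat \<Rightarrow> (nat \<Rightarrow> 'a::zero) \<Rightarrow> 'a mat" where
  "border_mat m u = mat m m (\<lambda>(i,j). if i = 0 \<and> 2 \<le> j then u j else if j = 0 \<and> 2 \<le> i then u i else 0)"

text \<open>
  The entries (1,n-1) and (n-1,n-1) of M after subtracting l times row and column 0 from
  row and column n-1; \<open>reduced_minor\<close> is the resulting 2x2 minor on the indices {1,n-1}.
\<close>
definition reduced_off :: "'a::comm_ring_1 \<Rightarrow> nat \<Rightarrow> 'a mat \<Rightarrow> 'a" where
  "reduced_off l n M = M $$ (1,n-1) - l * M $$ (0,1)"

definition reduced_last :: "'a::comm_ring_1 \<Rightarrow> nat \<Rightarrow> 'a mat \<Rightarrow> 'a" where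
  "reduced_last l n M = M $$ (n-1,n-1) - 2 * l * M $$ (0,n-1) + l * l * M $$ (0,0)"

definition reduced_minor :: "'a::comm_ring_1 \<Rightarrow> nat \<Rightarrow> 'a mat \<Rightarrow> 'a" where
  "reduced_minor l n M = M $$ (1,1) * reduced_last l n M - (reduced_off l n M)^2"

locale rank3_space =
  fixes S :: "'a::field mat set" and n :: nat
  assumes n_ge_4: "n \<ge> 4" and subspace: "mat_subspace n S" and symmetric: "S \<subseteq> sym_mats n"
    and rank_le_3: "\<forall>M\<in>S. vec_space.rank n M \<le> 3"
    and upper_left_WS11: "upper_left n ` S \<subseteq> WS11 (n - 1)"
begin

lemma mem_carrier: "M \<in> S \<Longrightarrow> M \<in> carrier_mat n n"
  using symmetric unfolding sym_mats_def by auto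

lemma sym_entry:
  assumes "M \<in> S" "i < n" "j < n"
  shows "M $$ (j,i) = M $$ (i,j)"
proof -
  have "transpose_mat M $$ (i,j) = M $$ (i,j)"
    using symmetric assms(1) unfolding sym_mats_def by auto
  then show ?thesis using mem_carrier[OF assms(1)] assms(2,3) by simp
qed

lemma upper_left_entry_eq_0:
  assumes "M \<in> S" "i < n - 1" "j < n - 1" "1 \<le> i" "1 \<le> j" "2 \<le> max i j"
  shows "M $$ (i,j) = 0"
proof -
  have "upper_left n M $$ (i,j) = 0"
    using upper_left_WS11 assms unfolding WS11_def by auto
  then show ?thesis using assms unfolding upper_left_def by simp
qed

lemma add_closed: "M \<in> S \<Longrightarrow> N \<in> S \<Longrightarrow> M + N \<in> S"
  using submodule.m_closed[OF VectorSpace.subspace.submod[OF subspace[unfolded mat_subspace_def]]]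
  by (simp add: module_mat_simps)

lemma index_add: "M \<in> S \<Longrightarrow> N \<in> S \<Longrightarrow> i < n \<Longrightarrow> j < n \<Longrightarrow> (M + N) $$ (i,j) = M $$ (i,j) + N $$ (i,j)"
  using mem_carrier[of N] by simp

lemma middle_cross_eq_ordered:
  assumes M: "M \<in> S" and r: "2 \<le> r" "r < s" and s: "s \<le> n - 2"
  shows "M $$ (0,r) * M $$ (s,n-1) = M $$ (0,s) * M $$ (r,n-1)"
proof -
  have idx: "s < n - 1" "n - 1 < n" using s n_ge_4 by auto
  have "det (mat 4 4 (\<lambda>(i,j). M $$ ([0,r,s,n-1] ! i, [0,r,s,n-1] ! j))) = 0"
    using det_minor4_eq_0_if_rank_le_3[OF mem_carrier[OF M]] rank_le_3 M r idx by auto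
  moreover have "M $$ (r,r) = 0" "M $$ (r,s) = 0" "M $$ (s,r) = 0" "M $$ (s,s) = 0"
    using upper_left_entry_eq_0[OF M] r idx by auto
  moreover have "M $$ (r,0) = M $$ (0,r)" "M $$ (s,0) = M $$ (0,s)" "M $$ (n-1,0) = M $$ (0,n-1)"
     "M $$ (n-1,r) = M $$ (r,n-1)" "M $$ (n-1,s) = M $$ (s,n-1)"
    using sym_entry[OF M] r idx by auto
  ultimately have "(M $$ (0,r) * M $$ (s,n-1) - M $$ (0,s) * M $$ (r,n-1))^2 = 0"
    by (simp add: det_mat_4 power2_eq_square algebra_simps)
  then show ?thesis by simp
qed

lemma middle_cross_eq:
  assumes M: "M \<in> S" and r: "2 \<le> r" "r \<le> n - 2" and s: "2 \<le> s" "s \<le> n - 2"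
  shows "M $$ (0,r) * M $$ (s,n-1) = M $$ (0,s) * M $$ (r,n-1)"
  using middle_cross_eq_ordered[OF M, of r s] middle_cross_eq_ordered[OF M, of s r] r s
  by (cases r s rule: linorder_cases) (auto simp: mult.commute)

lemma middle_cross_eq_polarized:
  assumes M: "M \<in> S" and N: "N \<in> S" and r: "2 \<le> r" "r \<le> n - 2" and s: "2 \<le> s" "s \<le> n - 2"
  shows "M $$ (0,r) * N $$ (s,n-1) + N $$ (0,r) * M $$ (s,n-1) =
    M $$ (0,s) * N $$ (r,n-1) + N $$ (0,s) * M $$ (r,n-1)"
proof -
  have idx: "r < n" "s < n" "n - 1 < n" "0 < n" using r s n_ge_4 by auto
  have "(M + N) $$ (0,r) * (M + N) $$ (s,n-1) = (M + N) $$ (0,s) * (M + N) $$ (r,n-1)"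
    using middle_cross_eq[OF add_closed[OF M N] r s] .
  then show ?thesis
    using middle_cross_eq[OF M r s] middle_cross_eq[OF N r s] index_add[OF M N] idx
    by (simp add: algebra_simps)
qed

lemma exists_last_column_ratio:
  assumes a: "a \<in> S" and b: "b \<in> S"
    and r1: "2 \<le> r1" "r1 \<le> n - 2" and r2: "2 \<le> r2" "r2 \<le> n - 2"
    and independent: "a $$ (0,r1) * b $$ (0,r2) - a $$ (0,r2) * b $$ (0,r1) \<noteq> 0"
  obtains l where "\<And>M s. M \<in> S \<Longrightarrow> 2 \<le> s \<Longrightarrow> s \<le> n - 2 \<Longrightarrow> M $$ (s,n-1) = l * M $$ (0,s)"
proof -
  \<comment> \<open>Once l is read off from a, the defect M(s,n-1) - l M(0,s) of every M satisfies the cross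
    identities with the first rows of both a and b, which are independent.\<close>
  let ?P = "\<lambda>s. 2 \<le> s \<and> s \<le> n - 2"
  have shifted: "N $$ (0,r) * (M $$ (s,n-1) - l * M $$ (0,s)) = N $$ (0,s) * (M $$ (r,n-1) - l * M $$ (0,r))"
    if "N \<in> S" "\<And>s. ?P s \<Longrightarrow> N $$ (s,n-1) = l * N $$ (0,s)" "M \<in> S" "?P r" "?P s" for N M l r s
    using middle_cross_eq_polarized[of N M r s] that by (simp add: algebra_simps)
  obtain r0 where r0: "?P r0" "a $$ (0,r0) \<noteq> 0"
    using independent r1 r2 by (metis mult_zero_left diff_self)
  define l where "l = a $$ (r0,n-1) / a $$ (0,r0)"
  have la: "a $$ (s,n-1) = l * a $$ (0,s)" if "?P s" for s
    using middle_cross_eq[OF a, of r0 s] r0 that unfolding l_def by (simp add: field_simps)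
  have lb: "b $$ (s,n-1) = l * b $$ (0,s)" if s: "?P s" for s
    using eq_0_if_proportional_to_independent_pair[of "\<lambda>r. a $$ (0,r)" r1 "\<lambda>r. b $$ (0,r)" r2 ?P
        "\<lambda>s. b $$ (s,n-1) - l * b $$ (0,s)" s]
      independent shifted[OF a la b] middle_cross_eq[OF b] r1 r2 s
    by (auto simp: algebra_simps)
  show ?thesis
  proof (rule that)
    fix M s assume "M \<in> S" "2 \<le> s" "s \<le> n - 2"
    then show "M $$ (s,n-1) = l * M $$ (0,s)"
      using eq_0_if_proportional_to_independent_pair[of "\<lambda>r. a $$ (0,r)" r1 "\<lambda>r. b $$ (0,r)" r2 ?P
          "\<lambda>s. M $$ (s,n-1) - l * M $$ (0,s)" s]
        independent shifted[OF a la] shifted[OF b lb] r1 r2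
      by auto
  qed
qed

lemma reduced_minor_eq_0_if_first_row_nonzero:
  assumes ratio: "\<And>M s. M \<in> S \<Longrightarrow> 2 \<le> s \<Longrightarrow> s \<le> n - 2 \<Longrightarrow> M $$ (s,n-1) = l * M $$ (0,s)"
    and M: "M \<in> S" and r: "2 \<le> r" "r \<le> n - 2" and nonzero: "M $$ (0,r) \<noteq> 0"
  shows "reduced_minor l n M = 0"
proof -
  have idx: "r < n - 1" "n - 1 < n" "1 < r" using r n_ge_4 by auto
  have "det (mat 4 4 (\<lambda>(i,j). M $$ ([0,1,r,n-1] ! i, [0,1,r,n-1] ! j))) = 0"
    using det_minor4_eq_0_if_rank_le_3[OF mem_carrier[OF M]] rank_le_3 M r idx by auto
  moreover have "M $$ (r,r) = 0" "M $$ (r,1) = 0" "M $$ (1,r) = 0"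
    using upper_left_entry_eq_0[OF M] r idx by auto
  moreover have "M $$ (r,0) = M $$ (0,r)" "M $$ (1,0) = M $$ (0,1)" "M $$ (n-1,0) = M $$ (0,n-1)"
     "M $$ (n-1,r) = l * M $$ (0,r)" "M $$ (r,n-1) = l * M $$ (0,r)" "M $$ (n-1,1) = M $$ (1,n-1)"
    using sym_entry[OF M] ratio[OF M r] idx by auto
  ultimately have "(M $$ (0,r))^2 * reduced_minor l n M = 0"
    unfolding reduced_minor_def reduced_off_def reduced_last_def
    by (simp add: det_mat_4 power2_eq_square algebra_simps)
  then show ?thesis using nonzero by simp
qed

text \<open>If the middle part of the first row of M vanishes, the reduced minor of M is recovered by
  polarisation from those of a, b, M and sums of them, whose first rows do not vanish.\<close>
lemma reduced_minor_eq_0: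
  assumes ratio: "\<And>M s. M \<in> S \<Longrightarrow> 2 \<le> s \<Longrightarrow> s \<le> n - 2 \<Longrightarrow> M $$ (s,n-1) = l * M $$ (0,s)"
    and a: "a \<in> S" and b: "b \<in> S"
    and r1: "2 \<le> r1" "r1 \<le> n - 2" and r2: "2 \<le> r2" "r2 \<le> n - 2"
    and independent: "a $$ (0,r1) * b $$ (0,r2) - a $$ (0,r2) * b $$ (0,r1) \<noteq> 0"
    and M: "M \<in> S"
  shows "reduced_minor l n M = 0"
proof (cases "\<exists>r. 2 \<le> r \<and> r \<le> n - 2 \<and> M $$ (0,r) \<noteq> 0")
  case True
  then show ?thesis using reduced_minor_eq_0_if_first_row_nonzero[OF ratio M] by auto
next
  case False
  let ?q = "reduced_minor l n"
  have nz: "X \<in> S \<Longrightarrow> X $$ (0,r1) \<noteq> 0 \<or> X $$ (0,r2) \<noteq> 0 \<Longrightarrow> ?q X = 0" for X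
    using reduced_minor_eq_0_if_first_row_nonzero[OF ratio, of X] r1 r2 by auto
  have idx: "r1 < n" "r2 < n" "0 < n" "1 < n" "n - 1 < n" using r1 r2 n_ge_4 by auto
  have M0: "M $$ (0,r1) = 0" "M $$ (0,r2) = 0" using False r1 r2 by auto
  have ab: "a + b \<in> S" "a + M \<in> S" "b + M \<in> S" "a + b + M \<in> S" using add_closed a b M by auto
  have a_nz: "a $$ (0,r1) \<noteq> 0 \<or> a $$ (0,r2) \<noteq> 0" and b_nz: "b $$ (0,r1) \<noteq> 0 \<or> b $$ (0,r2) \<noteq> 0"
    using independent by auto
  have ab_nz: "(a + b) $$ (0,r1) \<noteq> 0 \<or> (a + b) $$ (0,r2) \<noteq> 0"
  proof (rule ccontr)
    assume "\<not> ?thesis"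
    then have "a $$ (0,r1) = - b $$ (0,r1)" "a $$ (0,r2) = - b $$ (0,r2)"
      using index_add[OF a b] idx by (auto simp: add_eq_0_iff)
    then show False using independent by (simp add: algebra_simps)
  qed
  have "?q a = 0" "?q b = 0" "?q (a + b) = 0" using nz a b ab a_nz b_nz ab_nz by auto
  moreover have "?q (a + M) = 0" "?q (b + M) = 0" "?q (a + b + M) = 0"
    using nz[OF ab(2)] nz[OF ab(3)] nz[OF ab(4)] a_nz b_nz ab_nz M0
      index_add[OF a M] index_add[OF b M] index_add[OF ab(1) M] idx by auto
  moreover have "?q M = ?q (a + M) + ?q (b + M) + ?q (a + b) - ?q (a + b + M) - ?q a - ?q b"
    unfolding reduced_minor_def reduced_off_def reduced_last_def
    using index_add[OF ab(1) M] index_add[OF a b] index_add[OF a M] index_add[OF b M] idx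
    by (simp add: power2_eq_square algebra_simps)
  ultimately show ?thesis by simp
qed

lemma last_row_reduction:
  assumes ratio: "\<And>M s. M \<in> S \<Longrightarrow> 2 \<le> s \<Longrightarrow> s \<le> n - 2 \<Longrightarrow> M $$ (s,n-1) = l * M $$ (0,s)"
    and M: "M \<in> S"
  defines "A \<equiv> transvection_mat n (-l) (n-1) 0 * M * transpose_mat (transvection_mat n (-l) (n-1) 0)"
  shows "supported_on_corner n A" "A $$ (1,1) = M $$ (1,1)"
    "A $$ (1,n-1) = reduced_off l n M" "A $$ (n-1,1) = reduced_off l n M"
    "A $$ (n-1,n-1) = reduced_last l n M"
proof -
  have idx: "0 < n" "1 < n" "n - 1 < n" "n - 1 \<noteq> 0" "1 \<noteq> n - 1" using n_ge_4 by auto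
  have A_idx: "A $$ (i,j) = M $$ (i,j) + (if i = n-1 then -l * M $$ (0,j) else 0)
     + (if j = n-1 then -l * M $$ (i,0) else 0) + (if i = n-1 \<and> j = n-1 then -l * -l * M $$ (0,0) else 0)"
    if "i < n" "j < n" for i j
    unfolding A_def using index_transvection_congruence[OF mem_carrier[OF M] that idx(1,4)] .
  show "A $$ (1,1) = M $$ (1,1)" using A_idx[of 1 1] idx by simp
  show "A $$ (1,n-1) = reduced_off l n M" "A $$ (n-1,1) = reduced_off l n M"
    using A_idx[of 1 "n-1"] A_idx[of "n-1" 1] idx sym_entry[OF M, of 0 1] sym_entry[OF M, of 1 "n-1"]
    unfolding reduced_off_def by simp_all
  show "A $$ (n-1,n-1) = reduced_last l n M"
    using A_idx[of "n-1" "n-1"] idx sym_entry[OF M, of 0 "n-1"]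
    unfolding reduced_last_def by (simp add: algebra_simps)
  show "supported_on_corner n A"
    unfolding supported_on_corner_def
  proof (intro allI impI)
    fix i j assume ij: "i < n" "j < n" "1 \<le> i" "1 \<le> j" "\<not> (i \<in> {1, n-1} \<and> j \<in> {1, n-1})"
    consider "i = n - 1" | "j = n - 1" | "i \<noteq> n - 1" "j \<noteq> n - 1" by blast
    then show "A $$ (i,j) = 0"
    proof cases
      case 1
      then show ?thesis
        using A_idx[OF ij(1,2)] ij ratio[OF M, of j] sym_entry[OF M, of j "n-1"] by auto
    next
      case 2
      then show ?thesis
        using A_idx[OF ij(1,2)] ij ratio[OF M, of i] sym_entry[OF M, of 0 i] by auto
    next
      case 3
      then show ?thesis using A_idx[OF ij(1,2)] upper_left_entry_eq_0[OF M, of i j] ij by auto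
    qed
  qed
qed

lemma reducing_congruence_into_WS11:
  assumes ratio: "\<And>M s. M \<in> S \<Longrightarrow> 2 \<le> s \<Longrightarrow> s \<le> n - 2 \<Longrightarrow> M $$ (s,n-1) = l * M $$ (0,s)"
    and M: "M \<in> S"
    and off: "reduced_off l n M + \<alpha> * reduced_last l n M +
        \<beta> * (M $$ (1,1) + 2 * \<alpha> * reduced_off l n M + \<alpha> * \<alpha> * reduced_last l n M) = 0"
    and last: "reduced_last l n M + 2 * \<beta> * (reduced_off l n M + \<alpha> * reduced_last l n M) +
        \<beta> * \<beta> * (M $$ (1,1) + 2 * \<alpha> * reduced_off l n M + \<alpha> * \<alpha> * reduced_last l n M) = 0"
  defines "G \<equiv> transvection_mat n \<beta> (n-1) 1 * (transvection_mat n \<alpha> 1 (n-1) * transvection_mat n (-l) (n-1) 0)"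
  shows "G * M * transpose_mat G \<in> WS11 n"
proof -
  let ?E1 = "transvection_mat n (-l) (n-1) 0" and ?E2 = "transvection_mat n \<alpha> 1 (n-1)"
    and ?E3 = "transvection_mat n \<beta> (n-1) 1"
  let ?A = "?E1 * M * transpose_mat ?E1"
  have Mc: "M \<in> carrier_mat n n" by (rule mem_carrier[OF M])
  have A: "?A \<in> carrier_mat n n" and G: "G \<in> carrier_mat n n"
    using Mc unfolding G_def by (auto intro!: mult_carrier_mat[of _ n n _ n])
  note reduced = last_row_reduction[OF ratio M]
  have E21: "?E2 * ?E1 \<in> carrier_mat n n" by (rule mult_carrier_mat[of _ n n _ n]) simp_all
  have "?E2 * ?A * transpose_mat ?E2 = (?E2 * ?E1) * M * transpose_mat (?E2 * ?E1)"
    by (rule congruence_mult[OF transvection_mat_carrier transvection_mat_carrier Mc])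
  then have congr: "G * M * transpose_mat G = ?E3 * (?E2 * ?A * transpose_mat ?E2) * transpose_mat ?E3"
    unfolding G_def using congruence_mult[OF transvection_mat_carrier E21 Mc] by simp
  have "(G * M * transpose_mat G) $$ (i,j) = 0"
    if "i < n" "j < n" "1 \<le> i" "1 \<le> j" "2 \<le> max i j" for i j
    unfolding congr using n_ge_4
    by (intro transvections_clear_corner[OF A _ reduced(1) _ _ _ that]) (use reduced(2-5) off last in auto)
  moreover have "transpose_mat (G * M * transpose_mat G) = G * M * transpose_mat G"
    using congruence_symmetric[OF G Mc] symmetric M unfolding sym_mats_def by auto
  ultimately show ?thesis
    unfolding WS11_def sym_mats_def using G Mc by auto
qed

lemma congruent_into_WS11_if_reduced_minor_eq_0:
  assumes ratio: "\<And>M s. M \<in> S \<Longrightarrow> 2 \<le> s \<Longrightarrow> s \<le> n - 2 \<Longrightarrow> M $$ (s,n-1) = l * M $$ (0,s)"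
    and minor: "\<And>M. M \<in> S \<Longrightarrow> reduced_minor l n M = 0"
  shows "congruent_into_WS11 n S"
proof -
  have idx: "1 < n" "n - 1 < n" "n - 1 \<noteq> 0" "1 \<noteq> n - 1" using n_ge_4 by auto
  have additive: "(M + N) $$ (1,1) = M $$ (1,1) + N $$ (1,1) \<and>
      reduced_off l n (M + N) = reduced_off l n M + reduced_off l n N \<and>
      reduced_last l n (M + N) = reduced_last l n M + reduced_last l n N" if "M \<in> S" "N \<in> S" for M N
    unfolding reduced_off_def reduced_last_def using index_add[OF that] idx by (auto simp: algebra_simps)
  have singular: "M $$ (1,1) * reduced_last l n M = (reduced_off l n M)^2" if "M \<in> S" for M
    using minor[OF that] unfolding reduced_minor_def by simp
  obtain \<alpha> \<beta> where \<alpha>\<beta>: "\<And>M. M \<in> S \<Longrightarrow>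
      reduced_off l n M + \<alpha> * reduced_last l n M +
        \<beta> * (M $$ (1,1) + 2 * \<alpha> * reduced_off l n M + \<alpha> * \<alpha> * reduced_last l n M) = 0 \<and>
      reduced_last l n M + 2 * \<beta> * (reduced_off l n M + \<alpha> * reduced_last l n M) +
        \<beta> * \<beta> * (M $$ (1,1) + 2 * \<alpha> * reduced_off l n M + \<alpha> * \<alpha> * reduced_last l n M) = 0"
    using common_reduction_of_singular_pencil[OF add_closed additive singular] by metis
  let ?E = "\<lambda>a k l. transvection_mat n a k l"
  have inverse: "?E a (n-1) 0 * ?E (-a) (n-1) 0 = 1\<^sub>m n" "?E a 1 (n-1) * ?E (-a) 1 (n-1) = 1\<^sub>m n"
    "?E a (n-1) 1 * ?E (-a) (n-1) 1 = 1\<^sub>m n" for a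
    using transvection_mat_inverse[of "n-1" 0 n a] transvection_mat_inverse[of 1 "n-1" n a]
      transvection_mat_inverse[of "n-1" 1 n a] idx by auto
  have "(?E \<beta> (n-1) 1 * (?E \<alpha> 1 (n-1) * ?E (-l) (n-1) 0)) *
      ((?E l (n-1) 0 * ?E (-\<alpha>) 1 (n-1)) * ?E (-\<beta>) (n-1) 1) = 1\<^sub>m n"
    using mult_right_inverse[OF _ _ _ _ inverse(2) inverse(1)[of "-l", simplified]]
    by (intro mult_right_inverse[OF _ _ _ _ inverse(3)]) (auto intro!: mult_carrier_mat[of _ n n _ n])
  then show ?thesis
    using reducing_congruence_into_WS11[OF ratio] \<alpha>\<beta> mem_carrier
    by (intro congruent_into_WS11I[OF subspace]) (auto intro!: mult_carrier_mat[of _ n n _ n])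
qed

lemma mat_subspace_upper_left: "mat_subspace (n - 1) (upper_left n ` S)"
proof (rule mat_subspace_linear_image[OF subspace])
  show "S \<subseteq> carrier_mat n n" using mem_carrier by auto
  fix M N :: "'a mat" assume M: "M \<in> carrier_mat n n" and N: "N \<in> carrier_mat n n"
  show "upper_left n M \<in> carrier_mat (n - 1) (n - 1)" unfolding upper_left_def by auto
  show "upper_left n (M + N) = upper_left n M + upper_left n N"
    unfolding upper_left_def using M N by (intro eq_matI) auto
next
  fix c and M :: "'a mat" assume "M \<in> carrier_mat n n"
  then show "upper_left n (c \<cdot>\<^sub>m M) = c \<cdot>\<^sub>m upper_left n M"
    unfolding upper_left_def by (intro eq_matI) auto
qed

lemma upper_left_decomposition:
  assumes M: "M \<in> S" and first_row: "\<And>j. 2 \<le> j \<Longrightarrow> j \<le> n - 2 \<Longrightarrow> M $$ (0,j) = t * u j"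
  shows "upper_left n M = M $$ (0,0) \<cdot>\<^sub>m sym_unit_mat (n-1) 0 0 + M $$ (0,1) \<cdot>\<^sub>m sym_unit_mat (n-1) 0 1
    + M $$ (1,1) \<cdot>\<^sub>m sym_unit_mat (n-1) 1 1 + t \<cdot>\<^sub>m border_mat (n-1) u" (is "_ = ?D")
proof (rule eq_matI)
  fix i j assume "i < dim_row ?D" "j < dim_col ?D"
  then have ij: "i < n - 1" "j < n - 1" by (auto simp: border_mat_def)
  consider "i = 0 \<and> j = 0" | "i = 0 \<and> j = 1" | "i = 1 \<and> j = 0" | "i = 0 \<and> 2 \<le> j" | "j = 0 \<and> 2 \<le> i"
    | "1 \<le> i \<and> 1 \<le> j"
    by linarith
  then show "upper_left n M $$ (i,j) = ?D $$ (i,j)"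
  proof cases
    case 6
    then show ?thesis
      using upper_left_entry_eq_0[OF M, of i j] ij
      by (cases "i = 1 \<and> j = 1") (auto simp: upper_left_def sym_unit_mat_def border_mat_def)
  qed (use ij first_row[of i] first_row[of j] sym_entry[OF M, of 0 1] sym_entry[OF M, of 0 i] in
       \<open>auto simp: upper_left_def sym_unit_mat_def border_mat_def\<close>)
qed (auto simp: upper_left_def border_mat_def)

lemma upper_left_image_subset_span:
  assumes first_row: "\<And>M j. M \<in> S \<Longrightarrow> 2 \<le> j \<Longrightarrow> j \<le> n - 2 \<Longrightarrow> M $$ (0,j) = t M * u j"
  shows "upper_left n ` S \<subseteq> LinearCombinations.module.span class_ring (module_mat TYPE('a) (n-1) (n-1))
    {sym_unit_mat (n-1) 0 0, sym_unit_mat (n-1) 0 1, sym_unit_mat (n-1) 1 1, border_mat (n-1) u}"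
proof
  interpret V: vectorspace "class_ring :: 'a ring" "module_mat TYPE('a) (n-1) (n-1)" by (rule matrix_vs)
  let ?A = "{sym_unit_mat (n-1) 0 0, sym_unit_mat (n-1) 0 1, sym_unit_mat (n-1) 1 1, border_mat (n-1) u}"
  have A: "?A \<subseteq> carrier (module_mat TYPE('a) (n-1) (n-1))"
    by (auto simp: sym_unit_mat_def border_mat_def module_mat_simps)
  have span: "submodule class_ring (V.span ?A) (module_mat TYPE('a) (n-1) (n-1))"
    by (rule V.span_is_submodule[OF A])
  have add: "Y + Z \<in> V.span ?A" if "Y \<in> V.span ?A" "Z \<in> V.span ?A" for Y Z
    using submodule.m_closed[OF span that] by (simp add: module_mat_simps)
  have smult: "c \<cdot>\<^sub>m Y \<in> V.span ?A" if "Y \<in> V.span ?A" for c Y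
    using submodule.smult_closed[OF span _ that] by (simp add: module_mat_simps)
  fix X assume "X \<in> upper_left n ` S"
  then obtain M where M: "M \<in> S" "X = upper_left n M" by auto
  have decomposition: "X = M $$ (0,0) \<cdot>\<^sub>m sym_unit_mat (n-1) 0 0 + M $$ (0,1) \<cdot>\<^sub>m sym_unit_mat (n-1) 0 1
      + M $$ (1,1) \<cdot>\<^sub>m sym_unit_mat (n-1) 1 1 + t M \<cdot>\<^sub>m border_mat (n-1) u"
    unfolding M(2) by (rule upper_left_decomposition[OF M(1) first_row[OF M(1)]])
  show "X \<in> V.span ?A"
    unfolding decomposition by (intro add smult) (use V.in_own_span[OF A] in auto)
qed

lemma exists_independent_first_rows:
  assumes dim: "mat_subspace_dim (n - 1) (upper_left n ` S) > 4"
  obtains a b r1 r2 where "a \<in> S" "b \<in> S" "2 \<le> r1" "r1 \<le> n - 2" "2 \<le> r2" "r2 \<le> n - 2"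
    "a $$ (0,r1) * b $$ (0,r2) - a $$ (0,r2) * b $$ (0,r1) \<noteq> 0"
proof (cases "\<exists>a\<in>S. \<exists>b\<in>S. \<exists>r1 r2. 2 \<le> r1 \<and> r1 \<le> n - 2 \<and> 2 \<le> r2 \<and> r2 \<le> n - 2 \<and>
    a $$ (0,r1) * b $$ (0,r2) - a $$ (0,r2) * b $$ (0,r1) \<noteq> 0")
  case True
  then show ?thesis using that by blast
next
  case False
  then have minors: "a $$ (0,r) * b $$ (0,s) = a $$ (0,s) * b $$ (0,r)"
    if "a \<in> S" "b \<in> S" "2 \<le> r \<and> r \<le> n - 2" "2 \<le> s \<and> s \<le> n - 2" for a b r s
    using that by auto
  obtain t u where tu: "\<And>M j. M \<in> S \<Longrightarrow> 2 \<le> j \<and> j \<le> n - 2 \<Longrightarrow> M $$ (0,j) = t M * u j"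
    using rank_one_if_2x2_minors_vanish[where A = S and P = "\<lambda>r. 2 \<le> r \<and> r \<le> n - 2"
        and f = "\<lambda>M r. M $$ (0,r)"] minors by metis
  have "M $$ (0,j) = t M * u j" if "M \<in> S" "2 \<le> j" "j \<le> n - 2" for M j
    using tu that by simp
  note span = upper_left_image_subset_span[OF this]
  interpret V: vectorspace "class_ring :: 'a ring" "module_mat TYPE('a) (n-1) (n-1)" by (rule matrix_vs)
  let ?A = "{sym_unit_mat (n-1) 0 0, sym_unit_mat (n-1) 0 1, sym_unit_mat (n-1) 1 1, border_mat (n-1) u}"
  have A: "?A \<subseteq> carrier (module_mat TYPE('a) (n-1) (n-1))"
    by (auto simp: sym_unit_mat_def border_mat_def module_mat_simps)
  have "mat_subspace_dim (n - 1) (upper_left n ` S) \<le> card ?A"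
    using V.subspace_dim_le_card_of_span[OF mat_subspace_upper_left[unfolded mat_subspace_def] _ A span]
    unfolding mat_subspace_dim_def by simp
  also have "\<dots> \<le> 4"
    using card_length[of "[sym_unit_mat (n-1) 0 0, sym_unit_mat (n-1) 0 1, sym_unit_mat (n-1) 1 1,
      border_mat (n-1) u]"]
    by simp
  finally show ?thesis using dim by simp
qed

end

theorem lemma4p8:
  fixes S :: "'a::field mat set" and n :: nat
  assumes "n \<ge> 4"
    and "mat_subspace n S"
    and "S \<subseteq> sym_mats n"
    and "\<forall>M\<in>S. vec_space.rank n M \<le> 3"
    and "upper_left n ` S \<subseteq> WS11 (n - 1)"
    and "mat_subspace_dim (n - 1) (upper_left n ` S) > 5"
  shows "\<exists>Q V. Q \<in> carrier_mat n n \<and> invertible_mat Q \<and> mat_subspace n V \<and>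
           V \<subseteq> WS11 n \<and> S = congr_img Q V"
proof -
  interpret rank3_space S n using assms(1-5) by unfold_locales
  have "mat_subspace_dim (n - 1) (upper_left n ` S) > 4" using assms(6) by linarith
  then obtain a b r1 r2 where ab: "a \<in> S" "b \<in> S" and r: "2 \<le> r1" "r1 \<le> n - 2" "2 \<le> r2" "r2 \<le> n - 2"
    and independent: "a $$ (0,r1) * b $$ (0,r2) - a $$ (0,r2) * b $$ (0,r1) \<noteq> 0"
    using exists_independent_first_rows by metis
  obtain l where ratio: "\<And>M s. M \<in> S \<Longrightarrow> 2 \<le> s \<Longrightarrow> s \<le> n - 2 \<Longrightarrow> M $$ (s,n-1) = l * M $$ (0,s)"
    using exists_last_column_ratio[OF ab r independent] by metis
  have "congruent_into_WS11 n S"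
    using congruent_into_WS11_if_reduced_minor_eq_0[OF ratio reduced_minor_eq_0[OF ratio ab r independent]] .
  then show ?thesis unfolding congruent_into_WS11_def .
qed

end
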